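(* Let $t\ge 2$, $k\ge 1$, and let $C$ be a binary linear $t$-CIS $[tk,k]$ code with generator matrix $G=(A_1\ A_2\ \cdots\ A_t)$, where each $A_j$ is an invertible $k\times k$ matrix over $\mathbb{F}_2$; let $A_j(\mathbf r_i)$ denote the $i$-th row of $A_j$. Let $\mathbf x_1,\dots,\mathbf x_t\in\mathbb{F}_2^k$ and $y_{ij}\in\mathbb{F}_2$ ($1\le i\le k$, $1\le j\le t$) be arbitrary. For each $j$, let $c_{1j},\dots,c_{kj}\in\mathbb{F}_2$ be the unique elements with $\mathbf x_j=\sum_{i=1}^k c_{ij}A_j(\mathbf r_i)$, and set $z_j=1+\sum_{i=1}^k c_{ij}y_{ij}$. Then the $(k+1)\times t(k+1)$ matrix $$G_1=\begin{pmatrix} z_1 & \mathbf x_1 & z_2 & \mathbf x_2 & \cdots & z_t & \mathbf x_t\\ y_{11} & A_1(\mathbf r_1) & y_{12} & A_2(\mathbf r_1) & \cdots & y_{1t} & A_t(\mathbf r_1)\\ \vdots & \vdots & \vdots & \vdots & & \vdots & \vdots\\ y_{k1} & A_1(\mathbf r_k) & y_{k2} & A_2(\mathbf r_k) & \cdots & y_{kt} & A_t(\mathbf r_k)\end{pmatrix}$$ generates a binary linear $t$-CIS $[t(k+1),k+1]$ code.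
   Context: A binary linear $[tk,k]$ code is $t$-CIS if its coordinate set can be partitioned into $t$ pairwise disjoint information sets, an information set being a set of $k$ coordinates whose columns in a generator matrix are linearly independent. *)

theory Defs
  imports Main "HOL-Library.Z2"
begin

text \<open>Matrices over F_2 (type bit) are functions nat => nat => bit, with
  row index first; only entries inside the stated bounds are relevant.
  Indices are 0-based.\<close>

definition rows_indep :: "nat \<Rightarrow> nat \<Rightarrow> (nat \<Rightarrow> nat \<Rightarrow> bit) \<Rightarrow> bool" where
  "rows_indep m n M \<longleftrightarrow>
     (\<forall>c :: nat \<Rightarrow> bit. (\<forall>l<n. (\<Sum>i<m. c i * M i l) = 0) \<longrightarrow> (\<forall>i<m. c i = 0))"

definition cols_indep :: "nat \<Rightarrow> (nat \<Rightarrow> nat \<Rightarrow> bit) \<Rightarrow> nat set \<Rightarrow> bool" where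
  "cols_indep m M S \<longleftrightarrow>
     (\<forall>c :: nat \<Rightarrow> bit. (\<forall>i<m. (\<Sum>l\<in>S. c l * M i l) = 0) \<longrightarrow> (\<forall>l\<in>S. c l = 0))"

definition info_set :: "nat \<Rightarrow> nat \<Rightarrow> (nat \<Rightarrow> nat \<Rightarrow> bit) \<Rightarrow> nat set \<Rightarrow> bool" where
  "info_set k n G S \<longleftrightarrow> S \<subseteq> {..<n} \<and> card S = k \<and> cols_indep k G S"

definition CIS_code :: "nat \<Rightarrow> nat \<Rightarrow> (nat \<Rightarrow> nat \<Rightarrow> bit) \<Rightarrow> bool" where
  "CIS_code t k G \<longleftrightarrow> rows_indep k (t * k) G \<and>
     (\<exists>I :: nat \<Rightarrow> nat set.
        (\<forall>j<t. info_set k (t * k) G (I j)) \<and>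
        (\<forall>j<t. \<forall>j'<t. j \<noteq> j' \<longrightarrow> I j \<inter> I j' = {}) \<and>
        (\<Union>j<t. I j) = {..<t * k})"

definition mat_invertible :: "nat \<Rightarrow> (nat \<Rightarrow> nat \<Rightarrow> bit) \<Rightarrow> bool" where
  "mat_invertible k M \<longleftrightarrow> (\<exists>B :: nat \<Rightarrow> nat \<Rightarrow> bit.
      (\<forall>i<k. \<forall>l<k. (\<Sum>m<k. B i m * M m l) = (if i = l then 1 else 0)) \<and>
      (\<forall>i<k. \<forall>l<k. (\<Sum>m<k. M i m * B m l) = (if i = l then 1 else 0)))"

definition block_gen :: "nat \<Rightarrow> (nat \<Rightarrow> nat \<Rightarrow> nat \<Rightarrow> bit) \<Rightarrow> nat \<Rightarrow> nat \<Rightarrow> bit" where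
  "block_gen k A = (\<lambda>i col. A (col div k) i (col mod k))"

text \<open>The extended (k+1) x t(k+1) matrix G_1: block j occupies columns
  j*(k+1) .. j*(k+1)+k; its first column is (z_j, y_{0j}, ..., y_{(k-1)j})^T,
  the remaining columns form (x_j ; A_j).\<close>
definition ext_gen :: "nat \<Rightarrow> (nat \<Rightarrow> bit) \<Rightarrow> (nat \<Rightarrow> nat \<Rightarrow> bit) \<Rightarrow> (nat \<Rightarrow> nat \<Rightarrow> bit)
    \<Rightarrow> (nat \<Rightarrow> nat \<Rightarrow> nat \<Rightarrow> bit) \<Rightarrow> nat \<Rightarrow> nat \<Rightarrow> bit" where
  "ext_gen k z x y A = (\<lambda>r col.
     (let j = col div (k + 1); p = col mod (k + 1) in
      if r = 0 then (if p = 0 then z j else x j (p - 1))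
      else (if p = 0 then y (r - 1) j else A j (r - 1) (p - 1))))"

end

(* Every block (z_j x_j; y_j A_j) of G_1 is invertible: since x_j = c_j A_j, its Schur complement
   z_j - x_j A_j^-1 y_j = z_j - c_j y_j equals 1.  So the rows of G_1 are independent (already
   those of its first block), and the t blocks of k + 1 consecutive columns are pairwise disjoint
   information sets. A_t) is t-CIS. *)

theory Submission
  imports Defs
begin

(* Z2 rewrites + and * on bit to xor and and, which turns every sum into a cardinality. *)
declare add_bit_eq_xor [simp del] mult_bit_eq_and [simp del]

lemma bit_add_self [simp]: "a + a = (0::bit)"
  by (metis diff_self minus_bit_def)

lemma sum_sum_mult_assoc:
  fixes w :: "nat \<Rightarrow> 'a::comm_semiring_1"
  shows "(\<Sum>j<n. (\<Sum>i<m. w i * P i j) * Q j) = (\<Sum>i<m. w i * (\<Sum>j<n. P i j * Q j))"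
  by (simp add: sum_distrib_left sum_distrib_right mult.assoc sum.swap[of _ "{..<n}"])

lemma mat_invertible_rows_indep:
  assumes "mat_invertible k M"
  shows "rows_indep k k M"
  unfolding rows_indep_def
proof (intro allI impI)
  fix w :: "nat \<Rightarrow> bit" and l
  assume w: "\<forall>p<k. (\<Sum>i<k. w i * M i p) = 0" and l: "l < k"
  obtain B where B: "\<forall>i<k. \<forall>l<k. (\<Sum>m<k. M i m * B m l) = (if i = l then 1 else 0)"
    using assms unfolding mat_invertible_def by blast
  have "w l = (\<Sum>i<k. if i = l then w i else 0)"
    using l by simp
  also have "\<dots> = (\<Sum>i<k. w i * (\<Sum>m<k. M i m * B m l))"
    using B l by (intro sum.cong) auto
  also have "\<dots> = (\<Sum>m<k. (\<Sum>i<k. w i * M i m) * B m l)"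
    by (rule sum_sum_mult_assoc[symmetric])
  also have "\<dots> = 0"
    using w by simp
  finally show "w l = 0" .
qed

lemma mat_invertible_cols_indep:
  assumes "mat_invertible k M"
  shows "cols_indep k M {..<k}"
  unfolding cols_indep_def
proof (intro allI impI ballI)
  fix d :: "nat \<Rightarrow> bit" and l
  assume d: "\<forall>i<k. (\<Sum>q<k. d q * M i q) = 0" and "l \<in> {..<k}"
  then have l: "l < k" by simp
  obtain B where B: "\<forall>i<k. \<forall>l<k. (\<Sum>m<k. B i m * M m l) = (if i = l then 1 else 0)"
    using assms unfolding mat_invertible_def by blast
  have "d l = (\<Sum>q<k. if l = q then d q else 0)"
    using l by simp
  also have "\<dots> = (\<Sum>q<k. (\<Sum>m<k. B l m * M m q) * d q)"
    using B l by (intro sum.cong) auto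
  also have "\<dots> = (\<Sum>m<k. B l m * (\<Sum>q<k. d q * M m q))"
    by (simp only: sum_sum_mult_assoc mult.commute[of "d _"])
  also have "\<dots> = 0"
    using d by simp
  finally show "d l = 0" .
qed

definition bordered :: "bit \<Rightarrow> (nat \<Rightarrow> bit) \<Rightarrow> (nat \<Rightarrow> bit) \<Rightarrow> (nat \<Rightarrow> nat \<Rightarrow> bit) \<Rightarrow> nat \<Rightarrow> nat \<Rightarrow> bit" where
  "bordered z x y M = (\<lambda>r p. if r = 0 then (if p = 0 then z else x (p - 1))
                                else (if p = 0 then y (r - 1) else M (r - 1) (p - 1)))"

lemma bordered_simps [simp]:
  "bordered z x y M 0 0 = z"
  "bordered z x y M 0 (Suc q) = x q"
  "bordered z x y M (Suc i) 0 = y i"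
  "bordered z x y M (Suc i) (Suc q) = M i q"
  by (simp_all add: bordered_def)

lemma bordered_rows_indep:
  assumes M: "rows_indep k k M"
    and x: "\<forall>p<k. x p = (\<Sum>i<k. c i * M i p)"
  shows "rows_indep (k + 1) (k + 1) (bordered (1 + (\<Sum>i<k. c i * y i)) x y M)"
    (is "rows_indep _ _ ?B")
  unfolding rows_indep_def
proof (intro allI impI)
  fix e :: "nat \<Rightarrow> bit" and r
  assume H: "\<forall>p<k + 1. (\<Sum>i<k + 1. e i * ?B i p) = 0" and r: "r < k + 1"
  have col: "e 0 * ?B 0 p + (\<Sum>i<k. e (Suc i) * ?B (Suc i) p) = 0" if "p < k + 1" for p
    using H that by (simp only: Suc_eq_plus1[symmetric] sum.lessThan_Suc_shift)
  define w where "w i = e 0 * c i + e (Suc i)" for i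
  have "(\<Sum>i<k. w i * M i p) = 0" if p: "p < k" for p
  proof -
    have "(\<Sum>i<k. w i * M i p) = e 0 * x p + (\<Sum>i<k. e (Suc i) * M i p)"
      using x p by (simp add: w_def distrib_right sum.distrib sum_distrib_left mult.assoc)
    also have "\<dots> = 0"
      using col[of "Suc p"] p by simp
    finally show ?thesis .
  qed
  then have "\<forall>i<k. w i = 0"
    using M unfolding rows_indep_def by blast
  then have e_Suc: "e (Suc i) = e 0 * c i" if "i < k" for i
    using that unfolding w_def by (metis add.commute add_0 add.assoc bit_add_self)
  have "e 0 = e 0 * (1 + (\<Sum>i<k. c i * y i)) + (\<Sum>i<k. e (Suc i) * y i)"
    using e_Suc by (simp add: distrib_left sum_distrib_left mult.assoc add.assoc)
  also have "\<dots> = 0"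
    using col[of 0] by simp
  finally have "e 0 = 0" .
  with e_Suc r show "e r = 0"
    by (cases r) auto
qed

lemma bordered_cols_indep:
  assumes M: "cols_indep k M {..<k}"
    and x: "\<forall>p<k. x p = (\<Sum>i<k. c i * M i p)"
  shows "cols_indep (k + 1) (bordered (1 + (\<Sum>i<k. c i * y i)) x y M) {..<k + 1}"
    (is "cols_indep _ ?B _")
  unfolding cols_indep_def
proof (intro allI impI ballI)
  fix d :: "nat \<Rightarrow> bit" and p
  assume H: "\<forall>r<k + 1. (\<Sum>q\<in>{..<k + 1}. d q * ?B r q) = 0" and p: "p \<in> {..<k + 1}"
  have row: "d 0 * ?B r 0 + (\<Sum>q<k. d (Suc q) * ?B r (Suc q)) = 0" if "r < k + 1" for r
    using H that by (simp only: Suc_eq_plus1[symmetric] sum.lessThan_Suc_shift)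
  have row_Suc: "(\<Sum>q<k. d (Suc q) * M i q) = d 0 * y i" if "i < k" for i
    using row[of "Suc i"] that by (simp add: eq_neg_iff_add_eq_0[symmetric])
  have "(\<Sum>q<k. d (Suc q) * x q) = (\<Sum>q<k. (\<Sum>i<k. c i * M i q) * d (Suc q))"
    using x by (simp add: mult.commute)
  also have "\<dots> = (\<Sum>i<k. c i * (\<Sum>q<k. d (Suc q) * M i q))"
    by (simp only: sum_sum_mult_assoc mult.commute[of "M _ _"])
  also have "\<dots> = d 0 * (\<Sum>i<k. c i * y i)"
    using row_Suc by (simp add: sum_distrib_left mult_ac)
  finally have "d 0 = d 0 * (1 + (\<Sum>i<k. c i * y i)) + (\<Sum>q<k. d (Suc q) * x q)"
    by (simp add: distrib_left add.assoc)
  also have "\<dots> = 0"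
    using row[of 0] by simp
  finally have d0: "d 0 = 0" .
  then have "\<forall>i<k. (\<Sum>q<k. d (Suc q) * M i q) = 0"
    using row_Suc by simp
  then have "\<forall>q\<in>{..<k}. d (Suc q) = 0"
    using M unfolding cols_indep_def by (elim allE[of _ "\<lambda>q. d (Suc q)"]) blast
  with d0 p show "d p = 0"
    by (cases p) auto
qed

lemma rows_indep_if_column_block:
  assumes N: "rows_indep m n N"
    and "b + n \<le> n'"
    and block: "\<forall>i<m. \<forall>p<n. M i (b + p) = N i p"
  shows "rows_indep m n' M"
  unfolding rows_indep_def
proof (intro allI impI)
  fix e :: "nat \<Rightarrow> bit" and i
  assume "\<forall>l<n'. (\<Sum>i<m. e i * M i l) = 0" and "i < m"
  moreover have "(\<Sum>i<m. e i * N i p) = (\<Sum>i<m. e i * M i (b + p))" if "p < n" for p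
    using block that by simp
  ultimately have "\<forall>p<n. (\<Sum>i<m. e i * N i p) = 0"
    using \<open>b + n \<le> n'\<close> by simp
  then show "e i = 0"
    using N \<open>i < m\<close> unfolding rows_indep_def by blast
qed

lemma cols_indep_column_block:
  assumes N: "cols_indep m N {..<n}"
    and block: "\<forall>i<m. \<forall>p<n. M i (b + p) = N i p"
  shows "cols_indep m M {b..<b + n}"
  unfolding cols_indep_def
proof (intro allI impI)
  fix d :: "nat \<Rightarrow> bit"
  assume H: "\<forall>i<m. (\<Sum>l\<in>{b..<b + n}. d l * M i l) = 0"
  have "(\<Sum>l\<in>{b..<b + n}. d l * M i l) = (\<Sum>p<n. d (b + p) * N i p)" if "i < m" for i
    using block that by (simp add: sum.atLeastLessThan_shift_0 atLeast0LessThan)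
  then have "\<forall>p\<in>{..<n}. d (b + p) = 0"
    using H N unfolding cols_indep_def by (elim allE[of _ "\<lambda>p. d (b + p)"]) simp
  then show "\<forall>l\<in>{b..<b + n}. d l = 0"
    by (metis atLeastLessThan_iff le_add_diff_inverse lessThan_iff nat_add_left_cancel_less)
qed

lemma less_imp_mult_add_le:
  fixes n :: nat
  assumes "j < j'"
  shows "j * n + n \<le> j' * n"
  using assms by (metis Suc_leI add.commute mult_Suc mult_le_mono1)

lemma column_block_subset:
  assumes "j < t"
  shows "{j * n..<j * n + n} \<subseteq> {..<t * (n::nat)}"
  using less_imp_mult_add_le[OF assms, of n] by auto

lemma UN_column_blocks: "(\<Union>j<t. {j * n..<j * n + n}) = {..<t * (n::nat)}"
  by (induction t) (auto simp: lessThan_Suc)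

lemma column_blocks_disjoint:
  assumes "j \<noteq> j'"
  shows "{j * n..<j * n + n} \<inter> {j' * n..<j' * (n::nat) + n} = {}"
  using assms less_imp_mult_add_le[of j j' n] less_imp_mult_add_le[of j' j n]
  by (cases "j < j'") auto

lemma CIS_code_if_blocks_nonsingular:
  assumes "0 < t"
    and block: "\<forall>j<t. \<forall>i<k. \<forall>p<k. G i (j * k + p) = N j i p"
    and rows: "\<forall>j<t. rows_indep k k (N j)"
    and cols: "\<forall>j<t. cols_indep k (N j) {..<k}"
  shows "CIS_code t k G"
  unfolding CIS_code_def
proof (intro conjI exI)
  show "rows_indep k (t * k) G"
  proof (rule rows_indep_if_column_block[of k k "N 0" 0])
    show "rows_indep k k (N 0)"
      using rows \<open>0 < t\<close> by blast
    show "0 + k \<le> t * k"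
      using \<open>0 < t\<close> by simp
    show "\<forall>i<k. \<forall>p<k. G i (0 + p) = N 0 i p"
      using block \<open>0 < t\<close> by (metis add_0 mult_0)
  qed
  let ?I = "\<lambda>j. {j * k..<j * k + k}"
  show "\<forall>j<t. info_set k (t * k) G (?I j)"
  proof (intro allI impI)
    fix j assume "j < t"
    then have "?I j \<subseteq> {..<t * k}"
      by (rule column_block_subset)
    moreover have "cols_indep k G (?I j)"
      using block cols \<open>j < t\<close> by (intro cols_indep_column_block[of k "N j"]) blast+
    ultimately show "info_set k (t * k) G (?I j)"
      unfolding info_set_def by simp
  qed
  show "\<forall>j<t. \<forall>j'<t. j \<noteq> j' \<longrightarrow> ?I j \<inter> ?I j' = {}"
    by (intro allI impI column_blocks_disjoint)
  show "(\<Union>j<t. ?I j) = {..<t * k}"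
    by (rule UN_column_blocks)
qed

lemma ext_gen_column_block:
  assumes "p < k + 1"
  shows "ext_gen k z x y A r (j * (k + 1) + p) = bordered (z j) (x j) (\<lambda>i. y i j) (A j) r p"
proof -
  have "(j * (k + 1) + p) div (k + 1) = j"
    using assms by (metis div_mult_self3 div_less add_0_right add_eq_0_iff_both_eq_0 zero_neq_one)
  moreover have "(j * (k + 1) + p) mod (k + 1) = p"
    using assms by (metis mod_mult_self3 mod_less)
  ultimately show ?thesis
    unfolding ext_gen_def bordered_def Let_def by (simp only:)
qed

theorem proposition5:
  fixes t k :: nat
    and A :: "nat \<Rightarrow> nat \<Rightarrow> nat \<Rightarrow> bit"
    and x :: "nat \<Rightarrow> nat \<Rightarrow> bit"
    and y :: "nat \<Rightarrow> nat \<Rightarrow> bit"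
    and c :: "nat \<Rightarrow> nat \<Rightarrow> bit"
  assumes "t \<ge> 2" and "k \<ge> 1"
    and "\<forall>j<t. mat_invertible k (A j)"
    and "CIS_code t k (block_gen k A)"
    and "\<forall>j<t. \<forall>l<k. x j l = (\<Sum>i<k. c i j * A j i l)"
  shows "CIS_code t (k + 1)
           (ext_gen k (\<lambda>j. 1 + (\<Sum>i<k. c i j * y i j)) x y A)"
proof (rule CIS_code_if_blocks_nonsingular)
  let ?z = "\<lambda>j. 1 + (\<Sum>i<k. c i j * y i j)"
  let ?N = "\<lambda>j. bordered (?z j) (x j) (\<lambda>i. y i j) (A j)"
  show "0 < t"
    using \<open>t \<ge> 2\<close> by simp
  show "\<forall>j<t. \<forall>i<k + 1. \<forall>p<k + 1. ext_gen k ?z x y A i (j * (k + 1) + p) = ?N j i p"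
    by (intro allI impI) (rule ext_gen_column_block)
  show "\<forall>j<t. rows_indep (k + 1) (k + 1) (?N j)"
  proof (intro allI impI)
    fix j assume "j < t"
    with assms(3,5) show "rows_indep (k + 1) (k + 1) (?N j)"
      by (intro bordered_rows_indep mat_invertible_rows_indep) simp_all
  qed
  show "\<forall>j<t. cols_indep (k + 1) (?N j) {..<k + 1}"
  proof (intro allI impI)
    fix j assume "j < t"
    with assms(3,5) show "cols_indep (k + 1) (?N j) {..<k + 1}"
      by (intro bordered_cols_indep mat_invertible_cols_indep) simp_all
  qed
qed

end
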